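(* Let $(X,\widetilde{\tau},\mathfrak{a}_E,E)$ be a soft aura topological space and $(G,E)\in\mathrm{SS}(X,E)$. Then: if $(G,E)$ is soft $\mathfrak{a}$-open it is soft $\mathfrak{a}$-$\alpha$-open; if it is soft $\mathfrak{a}$-$\alpha$-open it is both soft $\mathfrak{a}$-semi-open and soft $\mathfrak{a}$-pre-open; if it is soft $\mathfrak{a}$-semi-open or soft $\mathfrak{a}$-pre-open it is soft $\mathfrak{a}$-$b$-open; and if it is soft $\mathfrak{a}$-$b$-open it is soft $\mathfrak{a}$-$\beta$-open.
   Context: Let $X$ be a nonempty set and $E$ a nonempty parameter set. A soft set over $X$ is a map $F:E\to\mathcal{P}(X)$, written $(F,E)$; $\mathrm{SS}(X,E)$ denotes all soft sets; $\sqsubseteq$, $\sqcup$ are parameterwise inclusion and union. A soft topology $\widetilde{\tau}$ is a subfamily of $\mathrm{SS}(X,E)$ containing the soft sets with all values $\emptyset$ and all values $X$, closed under arbitrary soft unions and finite soft intersections. A soft scope function is a map $\mathfrak{a}_E:X\to\widetilde{\tau}$ with $x\in\mathfrak{a}_E(x)(e)$ for all $x\in X$, $e\in E$; $(X,\widetilde{\tau},\mathfrak{a}_E,E)$ is a soft aura topological space. $\mathrm{cl}_{\mathfrak{a}}(G,E)(e)=\{x:\mathfrak{a}_E(x)(e)\cap G(e)\neq\emptyset\}$, $\mathrm{int}_{\mathfrak{a}}(G,E)(e)=\{x:\mathfrak{a}_E(x)(e)\subseteq G(e)\}$. $(G,E)$ is: soft $\mathfrak{a}$-open if $\mathrm{int}_{\mathfrak{a}}(G,E)=(G,E)$;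 soft $\mathfrak{a}$-semi-open if $(G,E)\sqsubseteq\mathrm{cl}_{\mathfrak{a}}(\mathrm{int}_{\mathfrak{a}}(G,E))$; soft $\mathfrak{a}$-pre-open if $(G,E)\sqsubseteq\mathrm{int}_{\mathfrak{a}}(\mathrm{cl}_{\mathfrak{a}}(G,E))$; soft $\mathfrak{a}$-$\alpha$-open if $(G,E)\sqsubseteq\mathrm{int}_{\mathfrak{a}}(\mathrm{cl}_{\mathfrak{a}}(\mathrm{int}_{\mathfrak{a}}(G,E)))$; soft $\mathfrak{a}$-$\beta$-open if $(G,E)\sqsubseteq\mathrm{cl}_{\mathfrak{a}}(\mathrm{int}_{\mathfrak{a}}(\mathrm{cl}_{\mathfrak{a}}(G,E)))$; soft $\mathfrak{a}$-$b$-open if $(G,E)\sqsubseteq\mathrm{cl}_{\mathfrak{a}}(\mathrm{int}_{\mathfrak{a}}(G,E))\sqcup\mathrm{int}_{\mathfrak{a}}(\mathrm{cl}_{\mathfrak{a}}(G,E))$. *)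

theory Defs
  imports Main
begin

text \<open>A soft set over X with parameter set E is represented as a map
 F :: 'e => 'x set; only its values on E matter.  We require values in X on E
 and (for uniqueness of representation) empty values outside E.\<close>

definition soft_sets :: "'x set \<Rightarrow> 'e set \<Rightarrow> ('e \<Rightarrow> 'x set) set" where
  "soft_sets X E = {F. (\<forall>e\<in>E. F e \<subseteq> X) \<and> (\<forall>e. e \<notin> E \<longrightarrow> F e = {})}"

definition soft_subset :: "'e set \<Rightarrow> ('e \<Rightarrow> 'x set) \<Rightarrow> ('e \<Rightarrow> 'x set) \<Rightarrow> bool" where
  "soft_subset E F G \<longleftrightarrow> (\<forall>e\<in>E. F e \<subseteq> G e)"

definition soft_union :: "'e set \<Rightarrow> ('e \<Rightarrow> 'x set) \<Rightarrow> ('e \<Rightarrow> 'x set) \<Rightarrow> ('e \<Rightarrow> 'x set)" where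
  "soft_union E F G = (\<lambda>e. if e \<in> E then F e \<union> G e else {})"

definition soft_inter :: "'e set \<Rightarrow> ('e \<Rightarrow> 'x set) \<Rightarrow> ('e \<Rightarrow> 'x set) \<Rightarrow> ('e \<Rightarrow> 'x set)" where
  "soft_inter E F G = (\<lambda>e. if e \<in> E then F e \<inter> G e else {})"

definition soft_Union :: "'e set \<Rightarrow> ('e \<Rightarrow> 'x set) set \<Rightarrow> ('e \<Rightarrow> 'x set)" where
  "soft_Union E \<F> = (\<lambda>e. if e \<in> E then (\<Union>F\<in>\<F>. F e) else {})"

definition soft_null :: "'e set \<Rightarrow> ('e \<Rightarrow> 'x set)" where
  "soft_null E = (\<lambda>e. {})"

definition soft_absolute :: "'x set \<Rightarrow> 'e set \<Rightarrow> ('e \<Rightarrow> 'x set)" where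
  "soft_absolute X E = (\<lambda>e. if e \<in> E then X else {})"

definition soft_topology :: "'x set \<Rightarrow> 'e set \<Rightarrow> ('e \<Rightarrow> 'x set) set \<Rightarrow> bool" where
  "soft_topology X E T \<longleftrightarrow>
     T \<subseteq> soft_sets X E \<and>
     soft_null E \<in> T \<and> soft_absolute X E \<in> T \<and>
     (\<forall>\<F>. \<F> \<subseteq> T \<longrightarrow> soft_Union E \<F> \<in> T) \<and>
     (\<forall>F\<in>T. \<forall>G\<in>T. soft_inter E F G \<in> T)"

definition soft_scope_function ::
  "'x set \<Rightarrow> 'e set \<Rightarrow> ('e \<Rightarrow> 'x set) set \<Rightarrow> ('x \<Rightarrow> 'e \<Rightarrow> 'x set) \<Rightarrow> bool" where
  "soft_scope_function X E T a \<longleftrightarrow> (\<forall>x\<in>X. a x \<in> T \<and> (\<forall>e\<in>E. x \<in> a x e))"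

definition soft_aura_space ::
  "'x set \<Rightarrow> 'e set \<Rightarrow> ('e \<Rightarrow> 'x set) set \<Rightarrow> ('x \<Rightarrow> 'e \<Rightarrow> 'x set) \<Rightarrow> bool" where
  "soft_aura_space X E T a \<longleftrightarrow> X \<noteq> {} \<and> E \<noteq> {} \<and> soft_topology X E T \<and> soft_scope_function X E T a"

definition cl_a :: "'x set \<Rightarrow> 'e set \<Rightarrow> ('x \<Rightarrow> 'e \<Rightarrow> 'x set) \<Rightarrow> ('e \<Rightarrow> 'x set) \<Rightarrow> ('e \<Rightarrow> 'x set)" where
  "cl_a X E a G = (\<lambda>e. if e \<in> E then {x\<in>X. a x e \<inter> G e \<noteq> {}} else {})"

definition int_a :: "'x set \<Rightarrow> 'e set \<Rightarrow> ('x \<Rightarrow> 'e \<Rightarrow> 'x set) \<Rightarrow> ('e \<Rightarrow> 'x set) \<Rightarrow> ('e \<Rightarrow> 'x set)" where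
  "int_a X E a G = (\<lambda>e. if e \<in> E then {x\<in>X. a x e \<subseteq> G e} else {})"

definition soft_a_open where
  "soft_a_open X E a G \<longleftrightarrow> int_a X E a G = G"

definition soft_a_semi_open where
  "soft_a_semi_open X E a G \<longleftrightarrow> soft_subset E G (cl_a X E a (int_a X E a G))"

definition soft_a_pre_open where
  "soft_a_pre_open X E a G \<longleftrightarrow> soft_subset E G (int_a X E a (cl_a X E a G))"

definition soft_a_alpha_open where
  "soft_a_alpha_open X E a G \<longleftrightarrow> soft_subset E G (int_a X E a (cl_a X E a (int_a X E a G)))"

definition soft_a_beta_open where
  "soft_a_beta_open X E a G \<longleftrightarrow> soft_subset E G (cl_a X E a (int_a X E a (cl_a X E a G)))"

definition soft_a_b_open where
  "soft_a_b_open X E a G \<longleftrightarrow>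
     soft_subset E G (soft_union E (cl_a X E a (int_a X E a G)) (int_a X E a (cl_a X E a G)))"

end

theory Submission
  imports Defs
begin

text \<open>Only two properties of the aura operators are needed: both are monotone, and, because every
  point lies in its own scope, \<open>int_a G \<sqsubseteq> G \<sqsubseteq> cl_a G\<close>.\<close>

lemma soft_subset_trans: "soft_subset E F G \<Longrightarrow> soft_subset E G H \<Longrightarrow> soft_subset E F H"
  unfolding soft_subset_def by blast

lemma soft_subset_union1: "soft_subset E F (soft_union E F G)"
  and soft_subset_union2: "soft_subset E G (soft_union E F G)"
  unfolding soft_subset_def soft_union_def by auto

lemma soft_union_least:
  "soft_subset E F H \<Longrightarrow> soft_subset E G H \<Longrightarrow> soft_subset E (soft_union E F G) H"
  unfolding soft_subset_def soft_union_def by auto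

lemma int_a_mono: "soft_subset E G H \<Longrightarrow> soft_subset E (int_a X E a G) (int_a X E a H)"
  unfolding soft_subset_def int_a_def by auto

lemma cl_a_mono: "soft_subset E G H \<Longrightarrow> soft_subset E (cl_a X E a G) (cl_a X E a H)"
  unfolding soft_subset_def cl_a_def by auto

lemma int_a_in_soft_sets: "int_a X E a G \<in> soft_sets X E"
  unfolding soft_sets_def int_a_def by auto

lemma soft_aura_space_mem_scope:
  "soft_aura_space X E T a \<Longrightarrow> x \<in> X \<Longrightarrow> e \<in> E \<Longrightarrow> x \<in> a x e"
  unfolding soft_aura_space_def soft_scope_function_def by blast

context
  fixes X :: "'x set" and E :: "'e set" and a :: "'x \<Rightarrow> 'e \<Rightarrow> 'x set"
  assumes mem_scope: "\<And>x e. x \<in> X \<Longrightarrow> e \<in> E \<Longrightarrow> x \<in> a x e"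
begin

lemma int_a_subset: "soft_subset E (int_a X E a G) G"
  using mem_scope unfolding soft_subset_def int_a_def by auto

lemma cl_a_superset: "G \<in> soft_sets X E \<Longrightarrow> soft_subset E G (cl_a X E a G)"
  unfolding soft_subset_def soft_sets_def cl_a_def by (fastforce dest: mem_scope)

lemma soft_a_open_imp_alpha_open:
  assumes "soft_a_open X E a G"
  shows "soft_a_alpha_open X E a G"
proof -
  have "soft_subset E (int_a X E a (int_a X E a G)) (int_a X E a (cl_a X E a (int_a X E a G)))"
    by (intro int_a_mono cl_a_superset int_a_in_soft_sets)
  with assms show ?thesis
    unfolding soft_a_open_def soft_a_alpha_open_def by simp
qed

lemma soft_a_alpha_open_imp_semi_open:
  assumes "soft_a_alpha_open X E a G"
  shows "soft_a_semi_open X E a G"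
  using assms int_a_subset unfolding soft_a_alpha_open_def soft_a_semi_open_def
  by (rule soft_subset_trans)

lemma soft_a_alpha_open_imp_pre_open:
  assumes "soft_a_alpha_open X E a G"
  shows "soft_a_pre_open X E a G"
  using assms int_a_mono[OF cl_a_mono[OF int_a_subset]]
  unfolding soft_a_alpha_open_def soft_a_pre_open_def by (rule soft_subset_trans)

lemma soft_a_b_open_imp_beta_open:
  assumes "G \<in> soft_sets X E" and "soft_a_b_open X E a G"
  shows "soft_a_beta_open X E a G"
proof -
  have "soft_subset E (cl_a X E a (int_a X E a G)) (cl_a X E a (int_a X E a (cl_a X E a G)))"
    by (intro cl_a_mono int_a_mono cl_a_superset assms(1))
  moreover have "soft_subset E (int_a X E a (cl_a X E a G)) (cl_a X E a (int_a X E a (cl_a X E a G)))"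
    by (intro cl_a_superset int_a_in_soft_sets)
  ultimately have "soft_subset E (soft_union E (cl_a X E a (int_a X E a G)) (int_a X E a (cl_a X E a G)))
      (cl_a X E a (int_a X E a (cl_a X E a G)))"
    by (rule soft_union_least)
  with assms(2) show ?thesis
    unfolding soft_a_b_open_def soft_a_beta_open_def by (rule soft_subset_trans)
qed

end

lemma soft_a_semi_open_imp_b_open:
  assumes "soft_a_semi_open X E a G"
  shows "soft_a_b_open X E a G"
  using assms soft_subset_union1 unfolding soft_a_semi_open_def soft_a_b_open_def
  by (rule soft_subset_trans)

lemma soft_a_pre_open_imp_b_open:
  assumes "soft_a_pre_open X E a G"
  shows "soft_a_b_open X E a G"
  using assms soft_subset_union2 unfolding soft_a_pre_open_def soft_a_b_open_def
  by (rule soft_subset_trans)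

theorem theorem4p2:
  fixes X :: "'x set" and E :: "'e set" and T :: "('e \<Rightarrow> 'x set) set"
    and a :: "'x \<Rightarrow> 'e \<Rightarrow> 'x set" and G :: "'e \<Rightarrow> 'x set"
  assumes "soft_aura_space X E T a" and "G \<in> soft_sets X E"
  shows "(soft_a_open X E a G \<longrightarrow> soft_a_alpha_open X E a G)
    \<and> (soft_a_alpha_open X E a G \<longrightarrow> soft_a_semi_open X E a G \<and> soft_a_pre_open X E a G)
    \<and> (soft_a_semi_open X E a G \<or> soft_a_pre_open X E a G \<longrightarrow> soft_a_b_open X E a G)
    \<and> (soft_a_b_open X E a G \<longrightarrow> soft_a_beta_open X E a G)"
proof -
  note mem_scope = soft_aura_space_mem_scope[OF assms(1)]
  show ?thesis
  proof (intro conjI impI)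
    show "soft_a_alpha_open X E a G" if "soft_a_open X E a G"
      using mem_scope that by (rule soft_a_open_imp_alpha_open)
    show "soft_a_semi_open X E a G" if "soft_a_alpha_open X E a G"
      using mem_scope that by (rule soft_a_alpha_open_imp_semi_open)
    show "soft_a_pre_open X E a G" if "soft_a_alpha_open X E a G"
      using mem_scope that by (rule soft_a_alpha_open_imp_pre_open)
    show "soft_a_b_open X E a G" if "soft_a_semi_open X E a G \<or> soft_a_pre_open X E a G"
      using that soft_a_semi_open_imp_b_open soft_a_pre_open_imp_b_open by blast
    show "soft_a_beta_open X E a G" if "soft_a_b_open X E a G"
      using mem_scope assms(2) that by (rule soft_a_b_open_imp_beta_open)
  qed
qed

end
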